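(* (a) Let $\sigma^{(1)},\sigma^{(2)}$ be admissible controls with $\sigma^{(1)}(t)\ge\sigma^{(2)}(t)$ for all $t$, and let $w^{(i)}=(x_b^{(i)},x_d^{(i)},y^{(i)})$ solve $\dot w=f(t,w;\sigma^{(i)}(t))$ with $w^{(i)}(0)\in R(0)$ and $w^{(1)}(0)\ge w^{(2)}(0)$. Then $w^{(1)}(t)\ge w^{(2)}(t)$ for all $t\ge0$. (b) Let $y^{(1)},y^{(2)}:[0,\infty)\to\mathbb R$ be continuous with $s(t)\ge y^{(1)}(t)\ge y^{(2)}(t)\ge0$ for all $t$, and let $(x_b^{(i)},x_d^{(i)})$ solve $\dot{(x_b,x_d)}=g(t,(x_b,x_d);y^{(i)}(t))$ with $0\le x_b^{(i)}(0)\le b(0)$, $0\le x_d^{(i)}(0)\le d(0)$ and $(x_b^{(1)}(0),x_d^{(1)}(0))\ge(x_b^{(2)}(0),x_d^{(2)}(0))$. Then $(x_b^{(1)}(t),x_d^{(1)}(t))\ge(x_b^{(2)}(t),x_d^{(2)}(t))$ for all $t\ge0$.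
   Context: Fix $\lambda>0$, $\beta>0$, $\Gamma\in(0,1]$, $d_0\in(0,1)$. Let $(b(t),d(t))$ solve $\dot b=\beta d$, $\dot d=-\beta d+\lambda\Gamma ds$ with $b(0)=0$, $d(0)=d_0$, where $s=1-b-d$. For $w=(x_b,x_d,y)$ and control value $\sigma\in[0,1]$, define $f(t,w;\sigma)=(f_{x_b},f_{x_d},f_y)$ by $f_{x_b}=\beta x_d+\lambda(b-x_b)(x+y)$, $f_{x_d}=\Gamma\lambda(d-x_d)y+\Gamma\lambda x_ds+\lambda(d-x_d)(x+y)-\beta x_d$, $f_y=-\Gamma\lambda dy+\lambda\sigma(s-y)(x_b+y+(1-\Gamma)x_d)$, with $x=x_b+x_d$ and $b,d,s$ evaluated at $t$. For $(x_b,x_d)$ and a control value $y$, $g(t,(x_b,x_d);y)=(f_{x_b},f_{x_d})$ with the same formulas. Region $R(t)=\{(x_b,x_d,y):0\le x_b\le b(t),\ 0\le x_d\le d(t),\ 0\le y\le s(t)\}$. Admissible controls are piecewise Lipschitz continuous $\sigma:[0,\infty)\to[0,1]$. Vector inequalities are componentwise. *)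

theory Defs
  imports "HOL-Analysis.Analysis"
begin

text \<open>Right-hand side f(t,w;sigma) for w = (x_b, x_d, y); b, d are the background
  solution, s = 1 - b - d.\<close>
definition fvec ::
  "real \<Rightarrow> real \<Rightarrow> real \<Rightarrow> (real \<Rightarrow> real) \<Rightarrow> (real \<Rightarrow> real) \<Rightarrow>
   real \<Rightarrow> real \<times> real \<times> real \<Rightarrow> real \<Rightarrow> real \<times> real \<times> real" where
  "fvec lam beta Gam b d t w sig =
     (let xb = fst w; xd = fst (snd w); y = snd (snd w); x = xb + xd;
          bt = b t; dt = d t; st = 1 - b t - d t
      in ( beta * xd + lam * (bt - xb) * (x + y),
           Gam * lam * (dt - xd) * y + Gam * lam * xd * st + lam * (dt - xd) * (x + y) - beta * xd,
           - Gam * lam * dt * y + lam * sig * (st - y) * (xb + y + (1 - Gam) * xd)))"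

definition gvec ::
  "real \<Rightarrow> real \<Rightarrow> real \<Rightarrow> (real \<Rightarrow> real) \<Rightarrow> (real \<Rightarrow> real) \<Rightarrow>
   real \<Rightarrow> real \<times> real \<Rightarrow> real \<Rightarrow> real \<times> real" where
  "gvec lam beta Gam b d t v y =
     (let xb = fst v; xd = snd v; x = xb + xd;
          bt = b t; dt = d t; st = 1 - b t - d t
      in ( beta * xd + lam * (bt - xb) * (x + y),
           Gam * lam * (dt - xd) * y + Gam * lam * xd * st + lam * (dt - xd) * (x + y) - beta * xd))"

definition in_R :: "(real \<Rightarrow> real) \<Rightarrow> (real \<Rightarrow> real) \<Rightarrow> real \<Rightarrow> real \<times> real \<times> real \<Rightarrow> bool" where
  "in_R b d t w \<longleftrightarrow>
     0 \<le> fst w \<and> fst w \<le> b t \<and> 0 \<le> fst (snd w) \<and> fst (snd w) \<le> d t \<and>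
     0 \<le> snd (snd w) \<and> snd (snd w) \<le> 1 - b t - d t"

definition vge3 :: "real \<times> real \<times> real \<Rightarrow> real \<times> real \<times> real \<Rightarrow> bool" where
  "vge3 u v \<longleftrightarrow> fst u \<ge> fst v \<and> fst (snd u) \<ge> fst (snd v) \<and> snd (snd u) \<ge> snd (snd v)"

definition vge2 :: "real \<times> real \<Rightarrow> real \<times> real \<Rightarrow> bool" where
  "vge2 u v \<longleftrightarrow> fst u \<ge> fst v \<and> snd u \<ge> snd v"

definition piecewise_lipschitz :: "(real \<Rightarrow> real) \<Rightarrow> bool" where
  "piecewise_lipschitz sig \<longleftrightarrow>
     (\<forall>T>0. \<exists>P. finite P \<and> P \<subseteq> {0..T} \<and> 0 \<in> P \<and> T \<in> P \<and>
        (\<forall>a\<in>P. \<forall>c\<in>P. a < c \<and> {a<..<c} \<inter> P = {} \<longrightarrow>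
            (\<exists>L. L-lipschitz_on {a<..<c} sig)))"

definition admissible :: "(real \<Rightarrow> real) \<Rightarrow> bool" where
  "admissible sig \<longleftrightarrow> piecewise_lipschitz sig \<and> (\<forall>t\<ge>0. 0 \<le> sig t \<and> sig t \<le> 1)"

text \<open>w solves w' = f(t,w;sigma(t)) on [0,\<infinity>): continuous, and the ODE holds
  except on a countable set (the switching points of the control).\<close>
definition solves_f ::
  "real \<Rightarrow> real \<Rightarrow> real \<Rightarrow> (real \<Rightarrow> real) \<Rightarrow> (real \<Rightarrow> real) \<Rightarrow>
   (real \<Rightarrow> real) \<Rightarrow> (real \<Rightarrow> real \<times> real \<times> real) \<Rightarrow> bool" where
  "solves_f lam beta Gam b d sig w \<longleftrightarrow>
     continuous_on {0..} w \<and>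
     (\<exists>S. countable S \<and>
        (\<forall>t\<in>{0..} - S. (w has_vector_derivative fvec lam beta Gam b d t (w t) (sig t))
                           (at t within {0..})))"

definition solves_g ::
  "real \<Rightarrow> real \<Rightarrow> real \<Rightarrow> (real \<Rightarrow> real) \<Rightarrow> (real \<Rightarrow> real) \<Rightarrow>
   (real \<Rightarrow> real) \<Rightarrow> (real \<Rightarrow> real \<times> real) \<Rightarrow> bool" where
  "solves_g lam beta Gam b d y v \<longleftrightarrow>
     (\<forall>t\<ge>0. (v has_vector_derivative gvec lam beta Gam b d t (v t) (y t)) (at t within {0..}))"

end

theory Submission
  imports Defs
begin

(*
  The single analytic tool is a comparison principle for finitely many scalar
  functions (nonneg_invariance): if each q_i starts nonnegative and, whenever it is
  negative while all q_j are at least -N, its derivative is at least -K N, then all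
  q_i stay nonnegative; the derivative may fail to exist on a countable set (the
  switching times of a piecewise Lipschitz control).  It is proved by perturbing
  with e exp(L t) and showing that only countably many perturbation levels can exit.

  With q = the six slacks of the box R(t) it shows
  that R(t) is invariant (box_invariance); inside R the vector field is cooperative,
  so with q = the componentwise differences of two trajectories it shows that the
  order between them is preserved (order_preservation).  Part (b) reduces
  to the same two lemmas by attaching the given profile y as third component, since
  the field g is the first two components of f.
*)

lemma first_zero:
  fixes f :: "'i \<Rightarrow> real \<Rightarrow> real"
  assumes I: "finite I"
    and cont: "\<And>j. j \<in> I \<Longrightarrow> continuous_on {0..T} (f j)"
    and pos0: "\<And>j. j \<in> I \<Longrightarrow> 0 < f j 0"
    and "j0 \<in> I" "s0 \<in> {0..T}" "f j0 s0 \<le> 0"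
  obtains \<tau> k where "\<tau> \<in> {0<..T}" "k \<in> I" "f k \<tau> = 0"
    "\<And>j. j \<in> I \<Longrightarrow> 0 \<le> f j \<tau>"
    "\<And>j s. j \<in> I \<Longrightarrow> s \<in> {0..<\<tau>} \<Longrightarrow> 0 < f j s"
proof -
  define Z where "Z = {s \<in> {0..T}. \<exists>j\<in>I. f j s \<le> 0}"
  define \<tau> where "\<tau> = Inf Z"
  have "Z = (\<Union>j\<in>I. {s \<in> {0..T}. f j s \<le> 0})"
    unfolding Z_def by auto
  moreover have "closed {s \<in> {0..T}. f j s \<le> 0}" if "j \<in> I" for j
    using continuous_on_closed_Collect_le[OF cont[OF that] continuous_on_const] by simp
  ultimately have "closed Z" using I by auto
  moreover have "Z \<noteq> {}" "bdd_below Z"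
    using assms(4-6) unfolding Z_def by (auto intro: bdd_belowI[of _ 0])
  ultimately have \<tau>Z: "\<tau> \<in> Z" unfolding \<tau>_def by (rule closed_contains_Inf[rotated 2])
  then obtain k where k: "k \<in> I" "f k \<tau> \<le> 0" and \<tau>T: "\<tau> \<in> {0..T}" unfolding Z_def by auto
  have \<tau>pos: "0 < \<tau>" using \<tau>T k pos0[OF k(1)] by (cases "\<tau> = 0") auto
  have before: "0 < f j s" if "j \<in> I" "s \<in> {0..<\<tau>}" for j s
  proof -
    have "s \<notin> Z" using cInf_lower[OF _ \<open>bdd_below Z\<close>, of s] that unfolding \<tau>_def by force
    thus ?thesis using that \<tau>T unfolding Z_def by force
  qed
  have at: "0 \<le> f j \<tau>" if j: "j \<in> I" for j
  proof (rule ccontr)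
    assume "\<not> 0 \<le> f j \<tau>"
    moreover have "continuous_on {0..\<tau>} (f j)"
      using \<tau>T by (intro continuous_on_subset[OF cont[OF j]]) auto
    ultimately obtain x where "0 \<le> x" "x \<le> \<tau>" "f j x = 0"
      using IVT2'[of "f j" \<tau> 0 0] \<tau>pos pos0[OF j] by force
    thus False using before[OF j, of x] \<open>\<not> 0 \<le> f j \<tau>\<close> by (cases "x = \<tau>") auto
  qed
  show ?thesis
    using that[of \<tau> k] \<tau>pos \<tau>T k at before by (auto intro: order.antisym)
qed

lemma nonneg_invariance:
  fixes q q' :: "'i \<Rightarrow> real \<Rightarrow> real"
  assumes I: "finite I"
    and cont: "\<And>i. i \<in> I \<Longrightarrow> continuous_on {0..} (q i)"
    and S: "countable S"
    and deriv: "\<And>i t. i \<in> I \<Longrightarrow> t \<in> {0..} - S \<Longrightarrow>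
                  (q i has_real_derivative q' i t) (at t within {0..})"
    and init: "\<And>i. i \<in> I \<Longrightarrow> 0 \<le> q i 0"
    and coop: "\<And>T. \<exists>K. \<forall>t\<in>{0..T} - S. \<forall>i\<in>I. \<forall>N\<ge>0.
                  q i t < 0 \<longrightarrow> (\<forall>j\<in>I. -N \<le> q j t) \<longrightarrow> -(K * N) \<le> q' i t"
    and i: "i \<in> I" and t: "0 \<le> t"
  shows "0 \<le> q i t"
proof (rule ccontr)
  assume neg: "\<not> 0 \<le> q i t"
  obtain K where K: "\<forall>s\<in>{0..t} - S. \<forall>j\<in>I. \<forall>N\<ge>0.
      q j s < 0 \<longrightarrow> (\<forall>k\<in>I. -N \<le> q k s) \<longrightarrow> -(K * N) \<le> q' j s"
    using coop by blast
  define L where "L = \<bar>K\<bar> + 1"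
  define p where "p e j s = q j s + e * exp (L * s)" for e j s
  define exit where "exit e \<tau> \<longleftrightarrow> \<tau> \<in> {0<..t} \<and> (\<exists>k\<in>I. p e k \<tau> = 0) \<and>
      (\<forall>j\<in>I. 0 \<le> p e j \<tau>) \<and> (\<forall>j\<in>I. \<forall>s\<in>{0..<\<tau>}. 0 < p e j s)" for e \<tau>
  define \<delta> where "\<delta> = - q i t / exp (L * t)"
  have exits: "\<exists>\<tau>. exit e \<tau>" if e: "e \<in> {0<..<\<delta>}" for e
  proof -
    have "e * exp (L * t) < \<delta> * exp (L * t)" using e by simp
    hence neg_t: "p e i t \<le> 0" unfolding p_def \<delta>_def by simp
    have cont_p: "continuous_on {0..t} (p e j)" if "j \<in> I" for j
      unfolding p_def
      by (intro continuous_intros continuous_on_subset[OF cont[OF that]]) auto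
    have pos_p: "0 < p e j 0" if "j \<in> I" for j using init[OF that] e unfolding p_def by simp
    obtain \<tau> k where "\<tau> \<in> {0<..t}" "k \<in> I" "p e k \<tau> = 0"
      "\<And>j. j \<in> I \<Longrightarrow> 0 \<le> p e j \<tau>" "\<And>j s. j \<in> I \<Longrightarrow> s \<in> {0..<\<tau>} \<Longrightarrow> 0 < p e j s"
      using first_zero[of I t "p e" i t, OF I cont_p pos_p i _ neg_t] t by auto
    thus ?thesis unfolding exit_def by blast
  qed
  text \<open>An exit can only happen at an exceptional point: elsewhere the perturbation
    pushes the exiting component strictly upwards.\<close>
  have exit_in_S: "\<tau> \<in> S" if e: "0 < e" and ex: "exit e \<tau>" for e \<tau>
  proof (rule ccontr)
    assume nS: "\<tau> \<notin> S"
    obtain k where k: "k \<in> I" "p e k \<tau> = 0" and \<tau>: "\<tau> \<in> {0<..t}" using ex unfolding exit_def by auto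
    define N where "N = e * exp (L * \<tau>)"
    have N: "0 < N" unfolding N_def using e by simp
    have "q k \<tau> < 0" "\<forall>j\<in>I. -N \<le> q j \<tau>"
      using k N ex unfolding exit_def p_def N_def by (auto simp: add_eq_0_iff)
    hence "-(K * N) \<le> q' k \<tau>"
      using K \<tau> nS k N by auto
    moreover have "K * N < L * N" using N unfolding L_def by simp
    moreover have "e * (exp (L * \<tau>) * L) = L * N" unfolding N_def by simp
    ultimately have rate: "0 < q' k \<tau> + e * (exp (L * \<tau>) * L)" by linarith
    have "(p e k has_real_derivative q' k \<tau> + e * (exp (L * \<tau>) * L)) (at \<tau> within {0..})"
      unfolding p_def using \<tau> nS k by (auto intro!: derivative_eq_intros deriv)
    from has_real_derivative_pos_inc_left[OF this rate]
    obtain d where d: "d > 0" "\<And>h. h > 0 \<Longrightarrow> \<tau> - h \<in> {0..} \<Longrightarrow> h < d \<Longrightarrow> p e k (\<tau> - h) < p e k \<tau>"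
      by blast
    define h where "h = min (d / 2) (\<tau> / 2)"
    have "p e k (\<tau> - h) < 0" using d k \<tau> unfolding h_def by auto
    moreover have "0 < p e k (\<tau> - h)" using ex k \<tau> d unfolding exit_def h_def by auto
    ultimately show False by simp
  qed
  have exit_unique: "e1 = e2" if "0 < e1" "0 < e2" "exit e1 \<tau>" "exit e2 \<tau>" for e1 e2 \<tau>
  proof -
    have "\<not> e1 < e2" if ex1: "exit e1 \<tau>" and ex2: "exit e2 \<tau>" for e1 e2
    proof
      assume "e1 < e2"
      obtain k where k: "k \<in> I" "p e2 k \<tau> = 0" using ex2 unfolding exit_def by auto
      moreover have "p e1 k \<tau> < p e2 k \<tau>" using \<open>e1 < e2\<close> unfolding p_def by simp
      ultimately show False using ex1 unfolding exit_def by force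
    qed
    thus ?thesis using that by (meson linorder_neqE_linordered_idom)
  qed
  define exit_time where "exit_time e = (SOME \<tau>. exit e \<tau>)" for e
  have \<delta>: "0 < \<delta>" using neg unfolding \<delta>_def by (simp add: divide_neg_pos)
  have ex: "exit e (exit_time e)" if "e \<in> {0<..<\<delta>}" for e
    unfolding exit_time_def using exits[OF that] by (rule someI_ex)
  have "inj_on exit_time {0<..<\<delta>}"
  proof (rule inj_onI)
    fix e1 e2 assume "e1 \<in> {0<..<\<delta>}" "e2 \<in> {0<..<\<delta>}" "exit_time e1 = exit_time e2"
    thus "e1 = e2" using ex[of e1] ex[of e2] exit_unique[of e1 e2] by auto
  qed
  moreover have "exit_time ` {0<..<\<delta>} \<subseteq> S" using ex exit_in_S by auto
  ultimately have "countable {0<..<\<delta>}"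
    using S countable_image_inj_on countable_subset by blast
  thus False using \<delta> uncountable_open_interval by blast
qed

lemma neg_times_bounded:
  fixes u c M N :: real
  assumes "u < 0" "u \<ge> -N" "\<bar>c\<bar> \<le> M"
  shows "u*c \<ge> -(M*N)"
proof -
  have "\<bar>u*c\<bar> \<le> N*M" unfolding abs_mult using assms by (intro mult_mono) auto
  thus ?thesis by (auto simp: algebra_simps)
qed

lemma prod_lower_bound:
  fixes u v M N a b :: real
  assumes "\<bar>u\<bar> \<le> M" "\<bar>v\<bar> \<le> M" "u \<ge> -(a*N)" "v \<ge> -(b*N)" "a \<ge> 0" "b \<ge> 0" "N \<ge> 0"
  shows "u* v \<ge> -(M*((a+b)*N))"
proof -
  have M: "M \<ge> 0" using assms(1) by linarith
  consider "u \<ge> 0" "v \<ge> 0" | "u \<ge> 0" "v < 0" | "u < 0" "v \<ge> 0" | "u < 0" "v < 0" by linarith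
  thus ?thesis
  proof cases
    case 1
    have "u* v \<ge> 0" using 1 by simp
    moreover have "M*((a+b)*N) \<ge> 0" using M assms by simp
    ultimately show ?thesis by linarith
  next
    case 2
    have "u*(-v) \<le> M*(b*N)" using assms 2 by (intro mult_mono) auto
    moreover have "M*(a*N) \<ge> 0" using M assms by simp
    ultimately show ?thesis by (simp add: algebra_simps)
  next
    case 3
    have "(-u)* v \<le> (a*N)*M" using assms 3 by (intro mult_mono) auto
    moreover have "M*(b*N) \<ge> 0" using M assms by simp
    ultimately show ?thesis by (simp add: algebra_simps)
  next
    case 4
    have "u* v > 0" using 4 by (simp add: mult_neg_neg)
    moreover have "M*((a+b)*N) \<ge> 0" using M assms by simp
    ultimately show ?thesis by linarith
  qed
qed

lemma scaled_lower_bound: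
  fixes c x K :: real
  assumes "0 \<le> c" "c \<le> C" "x \<ge> -K" "K \<ge> 0"
  shows "c*x \<ge> -(C*K)"
proof -
  have "c*x \<ge> c*(-K)" using assms by (intro mult_left_mono) auto
  moreover have "c*K \<le> C*K" using assms by (simp add: mult_right_mono)
  ultimately show ?thesis by simp
qed

lemma abs_scale_le:
  fixes c x M :: real
  assumes "0 \<le> c" "c \<le> 1" "\<bar>x\<bar> \<le> M"
  shows "\<bar>c*x\<bar> \<le> M"
proof -
  have "\<bar>c*x\<bar> = c*\<bar>x\<bar>" using assms by (simp add: abs_mult)
  also have "\<dots> \<le> \<bar>x\<bar>" using assms by (intro mult_left_le_one_le) auto
  finally show ?thesis using assms by simp
qed

text \<open>In the first group a state
  variable \<open>A, C, Y\<close> (or its distance to the bound \<open>b, d, s\<close>) is negative but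
  all slacks are at least \<open>-N\<close>; in the second group two states in \<open>R\<close> are compared
  and one coordinate of the difference is negative.  In each case the rate of the
  negative quantity is at least \<open>-K N\<close>, with \<open>M\<close> bounding all state values.\<close>

locale rate_bounds =
  fixes l \<beta> G M N :: real
  assumes l: "l > 0" and \<beta>: "\<beta> > 0" and G: "G > 0" "G \<le> 1" and N: "N \<ge> 0" and M: "M \<ge> 0"
begin

abbreviation "K \<equiv> \<beta> + 20*l*M"

lemma lMN_nonneg: "l*M*N \<ge> 0" using l M N by simp

lemma lower_xb_rate:
  assumes "\<bar>b - A\<bar> \<le> M" "\<bar>A\<bar> \<le> M" "\<bar>C\<bar> \<le> M" "\<bar>Y\<bar> \<le> M"
    "A \<ge> -N" "b - A \<ge> -N" "C \<ge> -N" "Y \<ge> -N"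
  shows "\<beta>*C + l*(b-A)*((A+C)+Y) \<ge> -(K*N)"
proof -
  have h1: "\<beta>*C \<ge> -(\<beta>*N)" by (rule scaled_lower_bound) (use \<beta> N assms in auto)
  have h2: "(b-A)*((A+C)+Y) \<ge> -((3*M)*((1+3)*N))"
    by (rule prod_lower_bound) (use assms M N in auto)
  have h3: "l*((b-A)*((A+C)+Y)) \<ge> -(l*((3*M)*((1+3)*N)))"
    by (rule scaled_lower_bound) (use h2 l M N in auto)
  show ?thesis using h1 h3 lMN_nonneg by (simp add: algebra_simps)
qed

lemma upper_xb_rate:
  assumes "\<bar>b - A\<bar> \<le> M" "\<bar>A\<bar> \<le> M" "\<bar>C\<bar> \<le> M" "\<bar>Y\<bar> \<le> M"
    "b - A < 0" "b - A \<ge> -N" "d - C \<ge> -N"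
  shows "\<beta>*d - (\<beta>*C + l*(b-A)*((A+C)+Y)) \<ge> -(K*N)"
proof -
  have h1: "\<beta>*(d-C) \<ge> -(\<beta>*N)" by (rule scaled_lower_bound) (use \<beta> N assms in auto)
  have h2: "(b-A)*(-((A+C)+Y)) \<ge> -((3*M)*N)"
    by (rule neg_times_bounded) (use assms M N in auto)
  have h3: "l*((b-A)*(-((A+C)+Y))) \<ge> -(l*((3*M)*N))"
    by (rule scaled_lower_bound) (use h2 l M N in auto)
  show ?thesis using h1 h3 lMN_nonneg by (simp add: algebra_simps)
qed

lemma lower_xd_rate:
  assumes "\<bar>d - C\<bar> \<le> M" "\<bar>A\<bar> \<le> M" "\<bar>C\<bar> \<le> M" "\<bar>Y\<bar> \<le> M" "\<bar>s\<bar> \<le> M"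
    "A \<ge> -N" "d - C \<ge> -N" "C \<ge> -N" "Y \<ge> -N" "C < 0"
  shows "G*l*(d-C)*Y + G*l*C* s + l*(d-C)*((A+C)+Y) - \<beta>*C \<ge> -(K*N)"
proof -
  have GL: "0 \<le> G*l" "G*l \<le> l" using G l by auto
  have h1: "(d-C)*Y \<ge> -(M*((1+1)*N))" by (rule prod_lower_bound) (use assms M N in auto)
  have h1b: "(G*l)*((d-C)*Y) \<ge> -(l*(M*((1+1)*N)))" by (rule scaled_lower_bound) (use h1 GL M N in auto)
  have h2: "C* s \<ge> -(M*N)" by (rule neg_times_bounded) (use assms in auto)
  have h2b: "(G*l)*(C* s) \<ge> -(l*(M*N))" by (rule scaled_lower_bound) (use h2 GL M N in auto)
  have h3: "(d-C)*((A+C)+Y) \<ge> -((3*M)*((1+3)*N))" by (rule prod_lower_bound) (use assms M N in auto)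
  have h3b: "l*((d-C)*((A+C)+Y)) \<ge> -(l*((3*M)*((1+3)*N)))" by (rule scaled_lower_bound) (use h3 l M N in auto)
  have h4: "\<beta>*C \<le> 0" using \<beta> assms by (intro mult_nonneg_nonpos) auto
  have h5: "\<beta>*N \<ge> 0" using \<beta> N by simp
  show ?thesis using h1b h2b h3b h4 h5 lMN_nonneg by (simp add: algebra_simps)
qed

lemma upper_xd_rate:
  assumes "\<bar>d - C\<bar> \<le> M" "\<bar>A\<bar> \<le> M" "\<bar>C\<bar> \<le> M" "\<bar>Y\<bar> \<le> M" "\<bar>s\<bar> \<le> M"
    "d - C \<ge> -N" "d - C < 0"
  shows "(- \<beta>*d + l*G*d* s) - (G*l*(d-C)*Y + G*l*C* s + l*(d-C)*((A+C)+Y) - \<beta>*C) \<ge> -(K*N)"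
proof -
  have eq: "(- \<beta>*d + l*G*d* s) - (G*l*(d-C)*Y + G*l*C* s + l*(d-C)*((A+C)+Y) - \<beta>*C)
      = (d-C)*(-\<beta> + l*G* s - G*l*Y - l*((A+C)+Y))" by (simp add: algebra_simps)
  have b1: "\<bar>l*G* s\<bar> \<le> l*M" using assms l G by (simp add: abs_mult mult_le_one mult_mono)
  have b2: "\<bar>G*l*Y\<bar> \<le> l*M" using assms l G by (simp add: abs_mult mult_le_one mult_mono)
  have b3: "\<bar>l*((A+C)+Y)\<bar> \<le> l*(3*M)" using assms l by (simp add: abs_mult mult_left_mono)
  have "\<bar>-\<beta> + l*G* s - G*l*Y - l*((A+C)+Y)\<bar> \<le> \<beta> + 5*l*M" using b1 b2 b3 \<beta> by (simp add: abs_le_iff)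
  hence "(d-C)*(-\<beta> + l*G* s - G*l*Y - l*((A+C)+Y)) \<ge> -((\<beta> + 5*l*M)*N)"
    by (intro neg_times_bounded) (use assms in auto)
  thus ?thesis using eq lMN_nonneg by (simp add: algebra_simps)
qed


lemma lower_y_rate:
  assumes "\<bar>d\<bar> \<le> M" "\<bar>A\<bar> \<le> M" "\<bar>C\<bar> \<le> M" "\<bar>Y\<bar> \<le> M" "\<bar>s - Y\<bar> \<le> M"
    "A \<ge> -N" "C \<ge> -N" "Y \<ge> -N" "s - Y \<ge> -N" "Y < 0" "0 \<le> \<sigma>" "\<sigma> \<le> 1"
  shows "- G*l*d*Y + l*\<sigma>*(s - Y)*(A + Y + (1-G)*C) \<ge> -(K*N)"
proof -
  have GL: "0 \<le> G*l" "G*l \<le> l" using G l by auto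
  have h1: "Y*(-d) \<ge> -(M*N)" by (rule neg_times_bounded) (use assms in auto)
  have h1b: "(G*l)*(Y*(-d)) \<ge> -(l*(M*N))" by (rule scaled_lower_bound) (use h1 GL M N in auto)
  have h2: "\<sigma>*(s-Y) \<ge> -(1*N)" by (rule scaled_lower_bound) (use assms N in auto)
  have h2a: "\<bar>\<sigma>*(s-Y)\<bar> \<le> M" using assms by (intro abs_scale_le) auto
  have h3: "(1-G)*C \<ge> -(1*N)" by (rule scaled_lower_bound) (use assms N G in auto)
  have h3a: "\<bar>(1-G)*C\<bar> \<le> M" using assms G by (intro abs_scale_le) auto
  have h4: "(\<sigma>*(s-Y))*(A + Y + (1-G)*C) \<ge> -((3*M)*((1+3)*N))"
    by (rule prod_lower_bound) (use assms M N h2 h2a h3 h3a in auto)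
  have h4b: "l*((\<sigma>*(s-Y))*(A + Y + (1-G)*C)) \<ge> -(l*((3*M)*((1+3)*N)))"
    by (rule scaled_lower_bound) (use h4 l M N in auto)
  have h5: "\<beta>*N \<ge> 0" using \<beta> N by simp
  show ?thesis using h1b h4b h5 lMN_nonneg by (simp add: algebra_simps)
qed

lemma upper_y_rate:
  assumes "\<bar>d\<bar> \<le> M" "\<bar>A\<bar> \<le> M" "\<bar>C\<bar> \<le> M" "\<bar>Y\<bar> \<le> M" 
    "s - Y \<ge> -N" "s - Y < 0" "0 \<le> \<sigma>" "\<sigma> \<le> 1"
  shows "(s - Y) * (- l*G*d - l*\<sigma>*(A + Y + (1-G)*C)) \<ge> -(K*N)"
proof -
  have b1: "\<bar>l*G*d\<bar> \<le> l*M" using assms l G by (simp add: abs_mult mult_le_one mult_mono)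
  have h3a: "\<bar>(1-G)*C\<bar> \<le> M" using assms G by (intro abs_scale_le) auto
  have "\<bar>A + Y + (1-G)*C\<bar> \<le> 3*M" using assms h3a by linarith
  hence b2: "\<bar>l*\<sigma>*(A + Y + (1-G)*C)\<bar> \<le> l*(3*M)" using assms l
    by (simp add: abs_mult mult_le_one mult_mono)
  have "\<bar>- l*G*d - l*\<sigma>*(A + Y + (1-G)*C)\<bar> \<le> \<beta> + 5*l*M" using b1 b2 \<beta> by (simp add: abs_le_iff)
  hence "(s - Y) * (- l*G*d - l*\<sigma>*(A + Y + (1-G)*C)) \<ge> -((\<beta> + 5*l*M)*N)"
    by (intro neg_times_bounded) (use assms in auto)
  thus ?thesis using lMN_nonneg by (simp add: algebra_simps)
qed

lemma diff_xb_rate: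
  assumes "0 \<le> b - A1" "b - A1 \<le> M" "A1 - A2 < 0" "A1 - A2 \<ge> -N" "C1 - C2 \<ge> -N" "Y1 - Y2 \<ge> -N"
    "A2 + C2 + Y2 \<ge> 0"
  shows "(\<beta>*C1 + l*(b-A1)*((A1+C1)+Y1)) - (\<beta>*C2 + l*(b-A2)*((A2+C2)+Y2)) \<ge> -(K*N)"
proof -
  have eq: "(\<beta>*C1 + l*(b-A1)*((A1+C1)+Y1)) - (\<beta>*C2 + l*(b-A2)*((A2+C2)+Y2))
     = \<beta>*(C1-C2) + l*((b-A1)*((A1-A2)+(C1-C2)+(Y1-Y2)) - (A1-A2)*((A2+C2)+Y2))"
    by (simp add: algebra_simps)
  have h1: "\<beta>*(C1-C2) \<ge> -(\<beta>*N)" by (rule scaled_lower_bound) (use \<beta> N assms in auto)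
  have h2: "(b-A1)*((A1-A2)+(C1-C2)+(Y1-Y2)) \<ge> -(M*(3*N))" by (rule scaled_lower_bound) (use assms N in auto)
  have h3: "(A1-A2)*((A2+C2)+Y2) \<le> 0" using assms by (intro mult_nonpos_nonneg) auto
  have h4: "l*((b-A1)*((A1-A2)+(C1-C2)+(Y1-Y2)) - (A1-A2)*((A2+C2)+Y2)) \<ge> -(l*(M*(3*N)))"
    by (rule scaled_lower_bound) (use h2 h3 l M N in auto)
  show ?thesis unfolding eq using h1 h4 lMN_nonneg by (simp add: algebra_simps)
qed

lemma diff_xd_rate:
  assumes "0 \<le> d - C1" "d - C1 \<le> M" "0 \<le> s" "s \<le> M" "C1 - C2 < 0" "A1 - A2 \<ge> -N" "C1 - C2 \<ge> -N" "Y1 - Y2 \<ge> -N"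
    "A2 + C2 + Y2 \<ge> 0" "Y2 \<ge> 0"
  shows "(G*l*(d-C1)*Y1 + G*l*C1* s + l*(d-C1)*((A1+C1)+Y1) - \<beta>*C1)
       - (G*l*(d-C2)*Y2 + G*l*C2* s + l*(d-C2)*((A2+C2)+Y2) - \<beta>*C2) \<ge> -(K*N)"
proof -
  have eq: "(G*l*(d-C1)*Y1 + G*l*C1* s + l*(d-C1)*((A1+C1)+Y1) - \<beta>*C1)
       - (G*l*(d-C2)*Y2 + G*l*C2* s + l*(d-C2)*((A2+C2)+Y2) - \<beta>*C2)
     = (G*l)*((d-C1)*(Y1-Y2) - (C1-C2)*Y2 + s*(C1-C2))
       + l*((d-C1)*((A1-A2)+(C1-C2)+(Y1-Y2)) - (C1-C2)*((A2+C2)+Y2)) - \<beta>*(C1-C2)"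
    by (simp add: algebra_simps)
  have GL: "0 \<le> G*l" "G*l \<le> l" using G l by auto
  have h1: "(d-C1)*(Y1-Y2) \<ge> -(M*N)" by (rule scaled_lower_bound) (use assms N in auto)
  have h1a: "(C1-C2)*Y2 \<le> 0" using assms by (intro mult_nonpos_nonneg) auto
  have h1c: "s*(C1-C2) \<ge> -(M*N)" by (rule scaled_lower_bound) (use assms N in auto)
  have h1b: "(G*l)*((d-C1)*(Y1-Y2) - (C1-C2)*Y2 + s*(C1-C2)) \<ge> -(l*(2*(M*N)))"
    by (rule scaled_lower_bound) (use h1 h1a h1c GL M N in auto)
  have h2: "(d-C1)*((A1-A2)+(C1-C2)+(Y1-Y2)) \<ge> -(M*(3*N))" by (rule scaled_lower_bound) (use assms N in auto)
  have h3: "(C1-C2)*((A2+C2)+Y2) \<le> 0" using assms by (intro mult_nonpos_nonneg) auto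
  have h4: "l*((d-C1)*((A1-A2)+(C1-C2)+(Y1-Y2)) - (C1-C2)*((A2+C2)+Y2)) \<ge> -(l*(M*(3*N)))"
    by (rule scaled_lower_bound) (use h2 h3 l M N in auto)
  have h5: "\<beta>*(C1-C2) \<le> 0" using \<beta> assms by (intro mult_nonneg_nonpos) auto
  have h6: "\<beta>*N \<ge> 0" using \<beta> N by simp
  show ?thesis unfolding eq using h1b h4 h5 h6 lMN_nonneg by (simp add: algebra_simps)
qed

lemma diff_y_rate:
  assumes "0 \<le> d" "0 \<le> s - Y1" "s - Y1 \<le> M" "Y1 - Y2 < 0" "A1 - A2 \<ge> -N" "C1 - C2 \<ge> -N" "Y1 - Y2 \<ge> -N"
    "A1 + Y1 + (1-G)*C1 \<ge> 0" "A2 + Y2 + (1-G)*C2 \<ge> 0" "0 \<le> \<sigma>2" "\<sigma>2 \<le> 1" "\<sigma>2 \<le> \<sigma>1"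
  shows "(- G*l*d*Y1 + l*\<sigma>1*(s - Y1)*(A1 + Y1 + (1-G)*C1))
       - (- G*l*d*Y2 + l*\<sigma>2*(s - Y2)*(A2 + Y2 + (1-G)*C2)) \<ge> -(K*N)"
proof -
  have eq: "(- G*l*d*Y1 + l*\<sigma>1*(s - Y1)*(A1 + Y1 + (1-G)*C1))
       - (- G*l*d*Y2 + l*\<sigma>2*(s - Y2)*(A2 + Y2 + (1-G)*C2))
     = - ((G*l*d)*(Y1-Y2)) + l*((\<sigma>1-\<sigma>2)*(s-Y1)*(A1 + Y1 + (1-G)*C1)
         + \<sigma>2*((s-Y1)*((A1-A2)+(Y1-Y2)+(1-G)*(C1-C2)) - (Y1-Y2)*(A2 + Y2 + (1-G)*C2)))"
    by (simp add: algebra_simps)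
  have h0: "(G*l*d)*(Y1-Y2) \<le> 0" using assms G l by (intro mult_nonneg_nonpos) auto
  have h1: "(\<sigma>1-\<sigma>2)*(s-Y1)*(A1 + Y1 + (1-G)*C1) \<ge> 0" using assms by simp
  have h2a: "(1-G)*(C1-C2) \<ge> -(1*N)" by (rule scaled_lower_bound) (use assms G N in auto)
  have h2: "(s-Y1)*((A1-A2)+(Y1-Y2)+(1-G)*(C1-C2)) \<ge> -(M*(3*N))" by (rule scaled_lower_bound) (use assms N h2a in auto)
  have h3: "(Y1-Y2)*(A2 + Y2 + (1-G)*C2) \<le> 0" using assms by (intro mult_nonpos_nonneg) auto
  have h4: "\<sigma>2*((s-Y1)*((A1-A2)+(Y1-Y2)+(1-G)*(C1-C2)) - (Y1-Y2)*(A2 + Y2 + (1-G)*C2)) \<ge> -(1*(M*(3*N)))"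
    by (rule scaled_lower_bound) (use h2 h3 assms M N in auto)
  have h5: "l*((\<sigma>1-\<sigma>2)*(s-Y1)*(A1 + Y1 + (1-G)*C1)
         + \<sigma>2*((s-Y1)*((A1-A2)+(Y1-Y2)+(1-G)*(C1-C2)) - (Y1-Y2)*(A2 + Y2 + (1-G)*C2))) \<ge> -(l*(M*(3*N)))"
    by (rule scaled_lower_bound) (use h1 h4 l M N in auto)
  have h6: "\<beta>*N \<ge> 0" using \<beta> N by simp
  show ?thesis unfolding eq using h0 h5 h6 lMN_nonneg by (simp add: algebra_simps)
qed

end


datatype coord = Xb | Xd | Yc
datatype side = Lower | Upper

lemma UNIV_coord: "(UNIV :: coord set) = {Xb, Xd, Yc}"
  using coord.exhaust by auto

lemma UNIV_side: "(UNIV :: side set) = {Lower, Upper}"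
  using side.exhaust by auto

instance coord :: finite by standard (simp add: UNIV_coord)
instance side :: finite by standard (simp add: UNIV_side)

fun component :: "coord \<Rightarrow> real \<times> real \<times> real \<Rightarrow> real" where
  "component Xb w = fst w"
| "component Xd w = fst (snd w)"
| "component Yc w = snd (snd w)"

fun cap :: "coord \<Rightarrow> real \<Rightarrow> real \<Rightarrow> real" where
  "cap Xb B D = B"
| "cap Xd B D = D"
| "cap Yc B D = 1 - B - D"

fun cap_rate :: "coord \<Rightarrow> real \<Rightarrow> real \<Rightarrow> real" where
  "cap_rate Xb B' D' = B'"
| "cap_rate Xd B' D' = D'"
| "cap_rate Yc B' D' = - B' - D'"

fun slack :: "coord \<times> side \<Rightarrow> real \<Rightarrow> real \<Rightarrow> real \<times> real \<times> real \<Rightarrow> real" where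
  "slack (c, Lower) B D w = component c w"
| "slack (c, Upper) B D w = cap c B D - component c w"

fun slack_rate :: "coord \<times> side \<Rightarrow> real \<Rightarrow> real \<Rightarrow> real \<times> real \<times> real \<Rightarrow> real" where
  "slack_rate (c, Lower) B' D' w' = component c w'"
| "slack_rate (c, Upper) B' D' w' = cap_rate c B' D' - component c w'"

lemma all_coord: "(\<forall>c. P c) \<longleftrightarrow> P Xb \<and> P Xd \<and> P Yc"
  by (metis coord.exhaust)

lemma all_side: "(\<forall>s. P s) \<longleftrightarrow> P Lower \<and> P Upper"
  by (metis side.exhaust)

lemma in_R_iff_slack: "in_R b d t w \<longleftrightarrow> (\<forall>k. 0 \<le> slack k (b t) (d t) w)"
  unfolding in_R_def by (auto simp: split_paired_All all_coord all_side)

lemma vge3_iff_component: "vge3 u v \<longleftrightarrow> (\<forall>c. component c v \<le> component c u)"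
  unfolding vge3_def by (simp add: all_coord)

lemma fvec_triple:
  "fvec lam beta Gam b d t (A, C, Y) \<sigma> =
    (beta * C + lam * (b t - A) * ((A + C) + Y),
     Gam * lam * (d t - C) * Y + Gam * lam * C * (1 - b t - d t) + lam * (d t - C) * ((A + C) + Y) - beta * C,
     - Gam * lam * d t * Y + lam * \<sigma> * ((1 - b t - d t) - Y) * (A + Y + (1 - Gam) * C))"
  unfolding fvec_def Let_def by simp

lemma slack_rate_bound:
  fixes lam beta Gam \<sigma> R N :: real
  assumes par: "lam > 0" "beta > 0" "0 < Gam" "Gam \<le> 1" and \<sigma>: "0 \<le> \<sigma>" "\<sigma> \<le> 1" and N: "0 \<le> N"
    and bnd: "\<bar>b t\<bar> \<le> R" "\<bar>d t\<bar> \<le> R" "\<And>c. \<bar>component c w\<bar> \<le> R"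
    and above: "\<And>j. -N \<le> slack j (b t) (d t) w" and neg: "slack k (b t) (d t) w < 0"
  shows "-((beta + 20 * lam * (3 * R + 1)) * N) \<le>
    slack_rate k (beta * d t) (- beta * d t + lam * Gam * d t * (1 - b t - d t))
      (fvec lam beta Gam b d t w \<sigma>)"
proof -
  obtain A C Y where w: "w = (A, C, Y)" by (cases w)
  have R: "0 \<le> R" using bnd(1) by linarith
  interpret rate_bounds lam beta Gam "3 * R + 1" N using par N R by unfold_locales auto
  have abs: "\<bar>A\<bar> \<le> 3 * R + 1" "\<bar>C\<bar> \<le> 3 * R + 1" "\<bar>Y\<bar> \<le> 3 * R + 1"
    "\<bar>b t - A\<bar> \<le> 3 * R + 1" "\<bar>d t - C\<bar> \<le> 3 * R + 1" "\<bar>d t\<bar> \<le> 3 * R + 1"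
    "\<bar>1 - b t - d t\<bar> \<le> 3 * R + 1" "\<bar>1 - b t - d t - Y\<bar> \<le> 3 * R + 1"
    using bnd bnd(3)[of Xb] bnd(3)[of Xd] bnd(3)[of Yc] unfolding w by auto
  have lo: "-N \<le> A" "-N \<le> b t - A" "-N \<le> C" "-N \<le> d t - C" "-N \<le> Y" "-N \<le> 1 - b t - d t - Y"
    using above[of "(Xb, Lower)"] above[of "(Xb, Upper)"] above[of "(Xd, Lower)"]
      above[of "(Xd, Upper)"] above[of "(Yc, Lower)"] above[of "(Yc, Upper)"]
    unfolding w by auto
  obtain c s where k: "k = (c, s)" by (cases k)
  show ?thesis
  proof (cases c; cases s)
    assume "c = Xb" "s = Lower"
    thus ?thesis using lower_xb_rate[of "b t" A C Y] abs lo neg unfolding k w by (simp add: fvec_triple)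
  next
    assume "c = Xb" "s = Upper"
    thus ?thesis using upper_xb_rate[of "b t" A C Y "d t"] abs lo neg unfolding k w by (simp add: fvec_triple)
  next
    assume "c = Xd" "s = Lower"
    thus ?thesis using lower_xd_rate[of "d t" C A Y "1 - b t - d t"] abs lo neg unfolding k w
      by (simp add: fvec_triple)
  next
    assume "c = Xd" "s = Upper"
    thus ?thesis using upper_xd_rate[of "d t" C A Y "1 - b t - d t"] abs lo neg unfolding k w
      by (simp add: fvec_triple)
  next
    assume "c = Yc" "s = Lower"
    thus ?thesis using lower_y_rate[of "d t" A C Y "1 - b t - d t" \<sigma>] abs lo neg \<sigma> unfolding k w
      by (simp add: fvec_triple)
  next
    assume "c = Yc" "s = Upper"
    have "- (beta * d t) - (- beta * d t + lam * Gam * d t * (1 - b t - d t))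
        - (- Gam * lam * d t * Y + lam * \<sigma> * (1 - b t - d t - Y) * (A + Y + (1 - Gam) * C))
      = (1 - b t - d t - Y) * (- lam * Gam * d t - lam * \<sigma> * (A + Y + (1 - Gam) * C))"
      by (simp add: algebra_simps)
    thus ?thesis using \<open>c = Yc\<close> \<open>s = Upper\<close> upper_y_rate[of "d t" A C Y "1 - b t - d t" \<sigma>] abs lo neg \<sigma>
      unfolding k w by (simp add: fvec_triple)
  qed
qed

text \<open>Since \<open>b, d, s \<in> [0, 1]\<close> on \<open>R\<close>, the constant does not depend on the states.\<close>

lemma component_rate_bound:
  fixes lam beta Gam \<sigma>1 \<sigma>2 N :: real
  assumes par: "lam > 0" "beta > 0" "0 < Gam" "Gam \<le> 1"
    and \<sigma>: "0 \<le> \<sigma>2" "\<sigma>2 \<le> 1" "\<sigma>2 \<le> \<sigma>1" and N: "0 \<le> N"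
    and R: "in_R b d t w1" "in_R b d t w2"
    and above: "\<And>c'. -N \<le> component c' w1 - component c' w2" and neg: "component c w1 - component c w2 < 0"
  shows "-((beta + 20 * lam) * N) \<le>
    component c (fvec lam beta Gam b d t w1 \<sigma>1) - component c (fvec lam beta Gam b d t w2 \<sigma>2)"
proof -
  obtain A1 C1 Y1 where w1: "w1 = (A1, C1, Y1)" by (cases w1)
  obtain A2 C2 Y2 where w2: "w2 = (A2, C2, Y2)" by (cases w2)
  interpret rate_bounds lam beta Gam 1 N using par N by unfold_locales auto
  have r1: "0 \<le> A1" "A1 \<le> b t" "0 \<le> C1" "C1 \<le> d t" "0 \<le> Y1" "Y1 \<le> 1 - b t - d t"
    and r2: "0 \<le> A2" "A2 \<le> b t" "0 \<le> C2" "C2 \<le> d t" "0 \<le> Y2" "Y2 \<le> 1 - b t - d t"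
    using R unfolding in_R_def w1 w2 by auto
  have lo: "-N \<le> A1 - A2" "-N \<le> C1 - C2" "-N \<le> Y1 - Y2"
    using above[of Xb] above[of Xd] above[of Yc] unfolding w1 w2 by auto
  have G: "0 \<le> 1 - Gam" using par by simp
  show ?thesis
  proof (cases c)
    case Xb
    thus ?thesis using diff_xb_rate[of "b t" A1 A2 C1 C2 Y1 Y2] r1 r2 lo neg unfolding w1 w2
      by (simp add: fvec_triple)
  next
    case Xd
    thus ?thesis using diff_xd_rate[of "d t" C1 "1 - b t - d t" C2 A1 A2 Y1 Y2] r1 r2 lo neg
      unfolding w1 w2 by (simp add: fvec_triple)
  next
    case Yc
    thus ?thesis using diff_y_rate[of "d t" "1 - b t - d t" Y1 Y2 A1 A2 C1 C2 "\<sigma>2" "\<sigma>1"] r1 r2 lo neg \<sigma> G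
      unfolding w1 w2 by (simp add: fvec_triple)
  qed
qed


lemma component_has_derivative:
  assumes "(w has_vector_derivative w') F"
  shows "((\<lambda>t. component c (w t)) has_real_derivative component c w') F"
proof -
  have w: "(w has_derivative (\<lambda>x. x *\<^sub>R w')) F" using assms unfolding has_vector_derivative_def .
  have w2: "((\<lambda>t. snd (w t)) has_derivative (\<lambda>x. x *\<^sub>R snd w')) F" using has_derivative_snd[OF w] by simp
  show ?thesis unfolding has_real_derivative_iff_has_vector_derivative has_vector_derivative_def
    using has_derivative_fst[OF w] has_derivative_fst[OF w2] has_derivative_snd[OF w2] by (cases c) simp_all
qed

lemma continuous_on_component:
  "continuous_on A w \<Longrightarrow> continuous_on A (\<lambda>t. component c (w t))"
  by (cases c) (auto intro: continuous_intros)

lemma continuous_on_slack: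
  assumes "continuous_on A b" "continuous_on A d" "continuous_on A w"
  shows "continuous_on A (\<lambda>t. slack k (b t) (d t) (w t))"
proof -
  obtain c s where k: "k = (c, s)" by (cases k)
  have "continuous_on A (\<lambda>t. cap c (b t) (d t))" using assms by (cases c) (auto intro!: continuous_intros)
  thus ?thesis using continuous_on_component[OF assms(3), of c] unfolding k
    by (cases s) (auto intro: continuous_intros)
qed

lemma slack_has_derivative:
  assumes "(b has_real_derivative B') F" "(d has_real_derivative D') F"
    and "((\<lambda>t. component (fst k) (w t)) has_real_derivative component (fst k) w') F"
  shows "((\<lambda>t. slack k (b t) (d t) (w t)) has_real_derivative slack_rate k B' D' w') F"
proof -
  obtain c s where k: "k = (c, s)" by (cases k)
  have "((\<lambda>t. cap c (b t) (d t)) has_real_derivative cap_rate c B' D') F"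
    using assms(1,2) by (cases c) (auto intro!: derivative_eq_intros)
  thus ?thesis using assms(3) unfolding k by (cases s) (auto intro!: derivative_eq_intros)
qed

lemma bounded_on_interval:
  fixes f :: "real \<Rightarrow> real"
  assumes "continuous_on {0..} f"
  obtains R where "0 \<le> R" "\<And>t. t \<in> {0..T} \<Longrightarrow> \<bar>f t\<bar> \<le> R"
proof -
  have "compact (f ` {0..T})"
    by (rule compact_continuous_image[OF continuous_on_subset[OF assms]]) auto
  then obtain R where "\<forall>x\<in>f ` {0..T}. \<bar>x\<bar> \<le> R" by (auto dest!: compact_imp_bounded simp: bounded_iff)
  thus ?thesis by (intro that[of "max R 0"]) (auto simp: le_max_iff_disj)
qed

lemma box_invariance:
  fixes J :: "coord set" and w :: "real \<Rightarrow> real \<times> real \<times> real"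
  assumes par: "lam > 0" "beta > 0" "0 < Gam" "Gam \<le> 1"
    and db: "\<forall>t\<ge>0. (b has_real_derivative beta * d t) (at t within {0..})"
    and dd: "\<forall>t\<ge>0. (d has_real_derivative (- beta * d t + lam * Gam * d t * (1 - b t - d t)))
                  (at t within {0..})"
    and \<sigma>: "\<forall>t\<ge>0. 0 \<le> \<sigma> t \<and> \<sigma> t \<le> 1"
    and w: "continuous_on {0..} w" and S: "countable S"
    and dw: "\<And>c t. c \<in> J \<Longrightarrow> t \<in> {0..} - S \<Longrightarrow> ((\<lambda>t. component c (w t)) has_real_derivative
                component c (fvec lam beta Gam b d t (w t) (\<sigma> t))) (at t within {0..})"
    and outside: "\<And>k t. fst k \<notin> J \<Longrightarrow> 0 \<le> t \<Longrightarrow> 0 \<le> slack k (b t) (d t) (w t)"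
    and init: "in_R b d 0 (w 0)" and t: "0 \<le> t"
  shows "in_R b d t (w t)"
proof -
  define q where "q k s = slack k (b s) (d s) (w s)" for k s
  define q' where "q' k s = slack_rate k (beta * d s) (- beta * d s + lam * Gam * d s * (1 - b s - d s))
      (fvec lam beta Gam b d s (w s) (\<sigma> s))" for k s
  have cb: "continuous_on {0..} b" and cd: "continuous_on {0..} d"
    using db dd by (auto intro!: DERIV_continuous_on)
  have inside: "0 \<le> q k t" if "fst k \<in> J" for k
  proof (rule nonneg_invariance[where I = "{k. fst k \<in> J}" and S = S and q = q and q' = q' and i = k and t = t])
    show "continuous_on {0..} (q j)" if "j \<in> {k. fst k \<in> J}" for j
      unfolding q_def by (rule continuous_on_slack[OF cb cd w])
    show "(q j has_real_derivative q' j s) (at s within {0..})" if "j \<in> {k. fst k \<in> J}" "s \<in> {0..} - S" for j s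
      unfolding q_def q'_def using that db dd dw by (intro slack_has_derivative) auto
    show "0 \<le> q j 0" if "j \<in> {k. fst k \<in> J}" for j using init unfolding q_def in_R_iff_slack by blast
    show "\<exists>K. \<forall>s\<in>{0..T} - S. \<forall>j\<in>{k. fst k \<in> J}. \<forall>N\<ge>0.
        q j s < 0 \<longrightarrow> (\<forall>i\<in>{k. fst k \<in> J}. -N \<le> q i s) \<longrightarrow> -(K * N) \<le> q' j s" for T
    proof -
      obtain Rb where Rb: "\<And>s. s \<in> {0..T} \<Longrightarrow> \<bar>b s\<bar> \<le> Rb" using bounded_on_interval[OF cb] by blast
      obtain Rd where Rd: "\<And>s. s \<in> {0..T} \<Longrightarrow> \<bar>d s\<bar> \<le> Rd" using bounded_on_interval[OF cd] by blast
      have "\<exists>Rw. \<forall>s\<in>{0..T}. \<bar>component c (w s)\<bar> \<le> Rw" for c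
        using bounded_on_interval[OF continuous_on_component[OF w]] by metis
      then obtain Rw where Rw: "\<And>c s. s \<in> {0..T} \<Longrightarrow> \<bar>component c (w s)\<bar> \<le> Rw c" by metis
      define R where "R = \<bar>Rb\<bar> + \<bar>Rd\<bar> + \<bar>Rw Xb\<bar> + \<bar>Rw Xd\<bar> + \<bar>Rw Yc\<bar>"
      have bnd: "\<bar>b s\<bar> \<le> R" "\<bar>d s\<bar> \<le> R" "\<bar>component c (w s)\<bar> \<le> R" if "s \<in> {0..T}" for s c
        using Rb[OF that] Rd[OF that] Rw[OF that, of c] unfolding R_def by (cases c; auto)+
      show ?thesis
      proof (intro exI ballI allI impI)
        fix s j N
        assume s: "s \<in> {0..T} - S" and N: "0 \<le> N" and neg: "q j s < 0"
          and above: "\<forall>i\<in>{k. fst k \<in> J}. -N \<le> q i s"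
        have "-N \<le> slack i (b s) (d s) (w s)" for i
        proof (cases "fst i \<in> J")
          case True
          thus ?thesis using above unfolding q_def by blast
        next
          case False
          thus ?thesis using outside[of i s] N s by force
        qed
        thus "-((beta + 20 * lam * (3 * R + 1)) * N) \<le> q' j s"
          unfolding q'_def using slack_rate_bound[OF par _ _ N] bnd neg \<sigma> s unfolding q_def by simp
      qed
    qed
  qed (use that t S in auto)
  show ?thesis unfolding in_R_iff_slack
  proof
    fix k
    show "0 \<le> slack k (b t) (d t) (w t)"
      using inside[of k] outside[of k t] t unfolding q_def by (cases "fst k \<in> J") auto
  qed
qed

lemma order_preservation:
  fixes J :: "coord set" and w1 w2 :: "real \<Rightarrow> real \<times> real \<times> real"
  assumes par: "lam > 0" "beta > 0" "0 < Gam" "Gam \<le> 1"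
    and \<sigma>: "\<forall>t\<ge>0. 0 \<le> \<sigma>' t \<and> \<sigma>' t \<le> 1 \<and> \<sigma>' t \<le> \<sigma> t"
    and w: "continuous_on {0..} w1" "continuous_on {0..} w2" and S: "countable S"
    and dw1: "\<And>c t. c \<in> J \<Longrightarrow> t \<in> {0..} - S \<Longrightarrow> ((\<lambda>t. component c (w1 t)) has_real_derivative
                component c (fvec lam beta Gam b d t (w1 t) (\<sigma> t))) (at t within {0..})"
    and dw2: "\<And>c t. c \<in> J \<Longrightarrow> t \<in> {0..} - S \<Longrightarrow> ((\<lambda>t. component c (w2 t)) has_real_derivative
                component c (fvec lam beta Gam b d t (w2 t) (\<sigma>' t))) (at t within {0..})"
    and R: "\<forall>t\<ge>0. in_R b d t (w1 t) \<and> in_R b d t (w2 t)"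
    and outside: "\<And>c t. c \<notin> J \<Longrightarrow> 0 \<le> t \<Longrightarrow> component c (w2 t) \<le> component c (w1 t)"
    and init: "vge3 (w1 0) (w2 0)" and t: "0 \<le> t"
  shows "vge3 (w1 t) (w2 t)"
proof -
  define q where "q c s = component c (w1 s) - component c (w2 s)" for c s
  define q' where "q' c s = component c (fvec lam beta Gam b d s (w1 s) (\<sigma> s))
      - component c (fvec lam beta Gam b d s (w2 s) (\<sigma>' s))" for c s
  have inside: "0 \<le> q c t" if "c \<in> J" for c
  proof (rule nonneg_invariance[where I = J and S = S and q = q and q' = q' and i = c and t = t])
    show "continuous_on {0..} (q c)" if "c \<in> J" for c
      unfolding q_def by (intro continuous_intros continuous_on_component w)
    show "(q c has_real_derivative q' c s) (at s within {0..})" if "c \<in> J" "s \<in> {0..} - S" for c s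
      unfolding q_def q'_def using that by (intro DERIV_diff dw1 dw2)
    show "0 \<le> q c 0" if "c \<in> J" for c using init unfolding q_def vge3_iff_component by simp
    show "\<exists>K. \<forall>s\<in>{0..T} - S. \<forall>c\<in>J. \<forall>N\<ge>0.
        q c s < 0 \<longrightarrow> (\<forall>c'\<in>J. -N \<le> q c' s) \<longrightarrow> -(K * N) \<le> q' c s" for T
    proof (intro exI ballI allI impI)
      fix s c N
      assume s: "s \<in> {0..T} - S" and N: "0 \<le> N" and neg: "q c s < 0"
        and above: "\<forall>c'\<in>J. -N \<le> q c' s"
      have "-N \<le> component c' (w1 s) - component c' (w2 s)" for c'
        using above outside[of c' s] N s unfolding q_def by (cases "c' \<in> J") auto
      thus "-((beta + 20 * lam) * N) \<le> q' c s"
        unfolding q'_def using component_rate_bound[OF par _ _ _ N] R neg \<sigma> s unfolding q_def by simp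
    qed
  qed (use that t S in auto)
  show ?thesis unfolding vge3_iff_component
  proof
    fix c
    show "component c (w2 t) \<le> component c (w1 t)"
      using inside[of c] outside[of c t] t unfolding q_def by (cases "c \<in> J") auto
  qed
qed


lemma solves_f_in_R:
  assumes par: "lam > 0" "beta > 0" "0 < Gam" "Gam \<le> 1"
    and db: "\<forall>t\<ge>0. (b has_real_derivative beta * d t) (at t within {0..})"
    and dd: "\<forall>t\<ge>0. (d has_real_derivative (- beta * d t + lam * Gam * d t * (1 - b t - d t)))
                  (at t within {0..})"
    and \<sigma>: "\<forall>t\<ge>0. 0 \<le> \<sigma> t \<and> \<sigma> t \<le> 1"
    and sol: "solves_f lam beta Gam b d \<sigma> w" and init: "in_R b d 0 (w 0)" and t: "0 \<le> t"
  shows "in_R b d t (w t)"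
proof -
  obtain S where w: "continuous_on {0..} w" and S: "countable S"
    and dw: "\<And>t. t \<in> {0..} - S \<Longrightarrow>
               (w has_vector_derivative fvec lam beta Gam b d t (w t) (\<sigma> t)) (at t within {0..})"
    using sol unfolding solves_f_def by blast
  show ?thesis
    by (rule box_invariance[OF par db dd \<sigma> w S, where J = UNIV])
      (use component_has_derivative dw init t in auto)
qed

definition triple :: "(real \<Rightarrow> real \<times> real) \<Rightarrow> (real \<Rightarrow> real) \<Rightarrow> real \<Rightarrow> real \<times> real \<times> real" where
  "triple v y t = (fst (v t), snd (v t), y t)"

lemma gvec_via_fvec:
  "fst (gvec lam beta Gam b d t v y) = component Xb (fvec lam beta Gam b d t (fst v, snd v, y) \<sigma>)"
  "snd (gvec lam beta Gam b d t v y) = component Xd (fvec lam beta Gam b d t (fst v, snd v, y) \<sigma>)"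
  unfolding gvec_def fvec_def Let_def by simp_all

lemma solves_g_continuous: "solves_g lam beta Gam b d y v \<Longrightarrow> continuous_on {0..} v"
  unfolding solves_g_def continuous_on_eq_continuous_within
  by (auto intro: has_vector_derivative_continuous)

lemma solves_g_triple_derivative:
  assumes sol: "solves_g lam beta Gam b d y v" and c: "c \<in> {Xb, Xd}" and t: "0 \<le> t"
  shows "((\<lambda>t. component c (triple v y t)) has_real_derivative
           component c (fvec lam beta Gam b d t (triple v y t) \<sigma>)) (at t within {0..})"
proof -
  have "(v has_derivative (\<lambda>x. x *\<^sub>R gvec lam beta Gam b d t (v t) (y t))) (at t within {0..})"
    using sol t unfolding solves_g_def has_vector_derivative_def by blast
  from has_derivative_fst[OF this] has_derivative_snd[OF this] show ?thesis
    using c unfolding has_real_derivative_iff_has_vector_derivative has_vector_derivative_def triple_def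
    by (auto simp: gvec_via_fvec[where \<sigma> = \<sigma>])
qed

lemma solves_g_in_R:
  assumes par: "lam > 0" "beta > 0" "0 < Gam" "Gam \<le> 1"
    and db: "\<forall>t\<ge>0. (b has_real_derivative beta * d t) (at t within {0..})"
    and dd: "\<forall>t\<ge>0. (d has_real_derivative (- beta * d t + lam * Gam * d t * (1 - b t - d t)))
                  (at t within {0..})"
    and y: "continuous_on {0..} y" "\<forall>t\<ge>0. 0 \<le> y t \<and> y t \<le> 1 - b t - d t"
    and sol: "solves_g lam beta Gam b d y v"
    and init: "0 \<le> fst (v 0)" "fst (v 0) \<le> b 0" "0 \<le> snd (v 0)" "snd (v 0) \<le> d 0"
    and t: "0 \<le> t"
  shows "in_R b d t (triple v y t)"
proof (rule box_invariance[OF par db dd, where \<sigma> = "\<lambda>_. 0" and J = "{Xb, Xd}" and S = "{}"])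
  show "continuous_on {0..} (triple v y)"
    unfolding triple_def using solves_g_continuous[OF sol] y(1) by (intro continuous_intros)
  show "0 \<le> slack k (b s) (d s) (triple v y s)" if "fst k \<notin> {Xb, Xd}" "0 \<le> s" for k s
  proof -
    obtain c sd where k: "k = (c, sd)" by (cases k)
    have "c = Yc" using that(1) k by (cases c) auto
    thus ?thesis using y(2) that(2) unfolding k triple_def by (cases sd) auto
  qed
qed (use solves_g_triple_derivative[OF sol] init y t in \<open>auto simp: in_R_def triple_def\<close>)

lemma control_monotonicity:
  assumes par: "lam > 0" "beta > 0" "0 < Gam" "Gam \<le> 1"
    and db: "\<forall>t\<ge>0. (b has_real_derivative beta * d t) (at t within {0..})"
    and dd: "\<forall>t\<ge>0. (d has_real_derivative (- beta * d t + lam * Gam * d t * (1 - b t - d t)))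
                  (at t within {0..})"
    and \<sigma>: "admissible \<sigma>1" "admissible \<sigma>2" "\<forall>t\<ge>0. \<sigma>2 t \<le> \<sigma>1 t"
    and sol: "solves_f lam beta Gam b d \<sigma>1 w1" "solves_f lam beta Gam b d \<sigma>2 w2"
    and init: "in_R b d 0 (w1 0)" "in_R b d 0 (w2 0)" "vge3 (w1 0) (w2 0)" and t: "0 \<le> t"
  shows "vge3 (w1 t) (w2 t)"
proof -
  have range: "\<forall>t\<ge>0. 0 \<le> \<sigma>1 t \<and> \<sigma>1 t \<le> 1" "\<forall>t\<ge>0. 0 \<le> \<sigma>2 t \<and> \<sigma>2 t \<le> 1"
    using \<sigma> unfolding admissible_def by auto
  obtain S1 where w1: "continuous_on {0..} w1" "countable S1" "\<And>t. t \<in> {0..} - S1 \<Longrightarrow>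
      (w1 has_vector_derivative fvec lam beta Gam b d t (w1 t) (\<sigma>1 t)) (at t within {0..})"
    using sol(1) unfolding solves_f_def by blast
  obtain S2 where w2: "continuous_on {0..} w2" "countable S2" "\<And>t. t \<in> {0..} - S2 \<Longrightarrow>
      (w2 has_vector_derivative fvec lam beta Gam b d t (w2 t) (\<sigma>2 t)) (at t within {0..})"
    using sol(2) unfolding solves_f_def by blast
  have R: "\<forall>t\<ge>0. in_R b d t (w1 t) \<and> in_R b d t (w2 t)"
    using solves_f_in_R[OF par db dd range(1) sol(1) init(1)]
      solves_f_in_R[OF par db dd range(2) sol(2) init(2)] by blast
  show ?thesis
  proof (rule order_preservation[OF par _ w1(1) w2(1),
        where S = "S1 \<union> S2" and J = UNIV and \<sigma> = \<sigma>1 and \<sigma>' = \<sigma>2])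
    show "countable (S1 \<union> S2)" using w1(2) w2(2) by simp
  qed (use range \<sigma>(3) w1(3) w2(3) component_has_derivative R init(3) t in auto)
qed

lemma infection_monotonicity:
  assumes par: "lam > 0" "beta > 0" "0 < Gam" "Gam \<le> 1"
    and db: "\<forall>t\<ge>0. (b has_real_derivative beta * d t) (at t within {0..})"
    and dd: "\<forall>t\<ge>0. (d has_real_derivative (- beta * d t + lam * Gam * d t * (1 - b t - d t)))
                  (at t within {0..})"
    and y: "continuous_on {0..} y1" "continuous_on {0..} y2"
      "\<forall>t\<ge>0. 1 - b t - d t \<ge> y1 t \<and> y1 t \<ge> y2 t \<and> y2 t \<ge> 0"
    and sol: "solves_g lam beta Gam b d y1 v1" "solves_g lam beta Gam b d y2 v2"
    and init1: "0 \<le> fst (v1 0)" "fst (v1 0) \<le> b 0" "0 \<le> snd (v1 0)" "snd (v1 0) \<le> d 0"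
    and init2: "0 \<le> fst (v2 0)" "fst (v2 0) \<le> b 0" "0 \<le> snd (v2 0)" "snd (v2 0) \<le> d 0"
    and init: "vge2 (v1 0) (v2 0)" and t: "0 \<le> t"
  shows "vge2 (v1 t) (v2 t)"
proof -
  have "\<forall>t\<ge>0. 0 \<le> y1 t \<and> y1 t \<le> 1 - b t - d t" "\<forall>t\<ge>0. 0 \<le> y2 t \<and> y2 t \<le> 1 - b t - d t"
    using y(3) by force+
  hence R: "\<forall>t\<ge>0. in_R b d t (triple v1 y1 t) \<and> in_R b d t (triple v2 y2 t)"
    using solves_g_in_R[OF par db dd y(1) _ sol(1) init1] solves_g_in_R[OF par db dd y(2) _ sol(2) init2]
    by blast
  have "vge3 (triple v1 y1 t) (triple v2 y2 t)"
  proof (rule order_preservation[OF par, where \<sigma> = "\<lambda>_. 0" and \<sigma>' = "\<lambda>_. 0" and J = "{Xb, Xd}" and S = "{}"])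
    show "continuous_on {0..} (triple v1 y1)" "continuous_on {0..} (triple v2 y2)"
      unfolding triple_def using solves_g_continuous[OF sol(1)] solves_g_continuous[OF sol(2)] y(1,2)
      by (auto intro!: continuous_intros)
    show "component c (triple v2 y2 s) \<le> component c (triple v1 y1 s)" if "c \<notin> {Xb, Xd}" "0 \<le> s" for c s
      using that y(3) unfolding triple_def by (cases c) auto
  qed (use solves_g_triple_derivative[OF sol(1)] solves_g_triple_derivative[OF sol(2)] R y(3) init t
         in \<open>auto simp: vge2_def vge3_def triple_def\<close>)
  thus ?thesis unfolding vge2_def vge3_def triple_def by simp
qed

theorem lemma4:
  fixes lam beta Gam d0 :: real and b d :: "real \<Rightarrow> real"
  assumes "lam > 0" and "beta > 0" and "0 < Gam" and "Gam \<le> 1" and "0 < d0" and "d0 < 1"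
    and "\<forall>t\<ge>0. (b has_real_derivative beta * d t) (at t within {0..})"
    and "\<forall>t\<ge>0. (d has_real_derivative (- beta * d t + lam * Gam * d t * (1 - b t - d t)))
                  (at t within {0..})"
    and "b 0 = 0" and "d 0 = d0"
  shows
   "(\<forall>sig1 sig2 w1 w2.
       admissible sig1 \<and> admissible sig2 \<and> (\<forall>t\<ge>0. sig1 t \<ge> sig2 t) \<and>
       solves_f lam beta Gam b d sig1 w1 \<and> solves_f lam beta Gam b d sig2 w2 \<and>
       in_R b d 0 (w1 0) \<and> in_R b d 0 (w2 0) \<and> vge3 (w1 0) (w2 0)
       \<longrightarrow> (\<forall>t\<ge>0. vge3 (w1 t) (w2 t)))
    \<and>
    (\<forall>y1 y2 v1 v2.
       continuous_on {0..} y1 \<and> continuous_on {0..} y2 \<and>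
       (\<forall>t\<ge>0. 1 - b t - d t \<ge> y1 t \<and> y1 t \<ge> y2 t \<and> y2 t \<ge> 0) \<and>
       solves_g lam beta Gam b d y1 v1 \<and> solves_g lam beta Gam b d y2 v2 \<and>
       0 \<le> fst (v1 0) \<and> fst (v1 0) \<le> b 0 \<and> 0 \<le> snd (v1 0) \<and> snd (v1 0) \<le> d 0 \<and>
       0 \<le> fst (v2 0) \<and> fst (v2 0) \<le> b 0 \<and> 0 \<le> snd (v2 0) \<and> snd (v2 0) \<le> d 0 \<and>
       vge2 (v1 0) (v2 0)
       \<longrightarrow> (\<forall>t\<ge>0. vge2 (v1 t) (v2 t)))"
  by (intro conjI allI impI; elim conjE)
    (rule control_monotonicity[OF assms(1-4,7,8)] infection_monotonicity[OF assms(1-4,7,8)]; assumption)+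

end
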